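(* Let $G=\langle s_1,s_2\mid s_2s_2=s_2\rangle$ and $\mathcal{A}=\{1,2\}$. Let $X\subseteq\mathcal{A}^G$ be a nonempty $G$-shift space, and for $n\ge 0$ let $\gamma_n$ be the number of distinct restrictions $t|_{E_n}$ with $t\in X$. Then the limit $$h(X)=\lim_{n\to\infty}\frac{\ln\gamma_n}{|E_n|}$$ exists (equivalently, the $\limsup$ defining the topological entropy is a limit).
   Context: $G$ is the monoid (identity $e$) generated by $s_1,s_2$ subject only to the relation $s_2s_2=s_2$; each element is represented uniquely by a finite word over $\{s_1,s_2\}$ containing no factor $s_2s_2$, and $|g|$ denotes the length of this word. $E_n=\{g\in G:|g|\le n\}$. For $t\in\mathcal{A}^G$ write $t_g=t(g)$. An $n$-block is a map $\tau:E_n\to\mathcal{A}$; a configuration $t$ accepts $\tau$ if there is $g\in G$ with $t_{gg'}=\tau_{g'}$ for all $g'\in E_n$, and avoids it otherwise. A $G$-shift space is a set $X\subseteq\mathcal{A}^G$ consisting of all configurations that avoid every block in some given set of forbidden blocks. The topological entropy is defined as $h(X)=\limsup_{n\to\infty}\ln\gamma_n/|E_n|$. *)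

theory Defs
  imports "HOL-Analysis.Analysis" "HOL-Library.FuncSet"
begin

text \<open>The monoid G = < s1, s2 | s2 s2 = s2 >, elements represented by their
unique reduced words (no factor s2 s2).\<close>

datatype gen = S1 | S2

fun reduced :: "gen list \<Rightarrow> bool" where
  "reduced [] = True"
| "reduced [x] = True"
| "reduced (x # y # w) = (\<not> (x = S2 \<and> y = S2) \<and> reduced (y # w))"

definition Gset :: "gen list set" where
  "Gset = {w. reduced w}"

definition gmul :: "gen list \<Rightarrow> gen list \<Rightarrow> gen list" where
  "gmul u v = (if u \<noteq> [] \<and> v \<noteq> [] \<and> last u = S2 \<and> hd v = S2 then u @ tl v else u @ v)"

definition E :: "nat \<Rightarrow> gen list set" where
  "E n = {g \<in> Gset. length g \<le> n}"

definition Alph :: "nat set" where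
  "Alph = {1, 2}"

definition Conf :: "(gen list \<Rightarrow> nat) set" where
  "Conf = Gset \<rightarrow>\<^sub>E Alph"

definition blocks :: "nat \<Rightarrow> (gen list \<Rightarrow> nat) set" where
  "blocks n = E n \<rightarrow>\<^sub>E Alph"

definition accepts :: "(gen list \<Rightarrow> nat) \<Rightarrow> nat \<Rightarrow> (gen list \<Rightarrow> nat) \<Rightarrow> bool" where
  "accepts t n \<tau> = (\<exists>g\<in>Gset. \<forall>g'\<in>E n. t (gmul g g') = \<tau> g')"

definition shift_of :: "(nat \<times> (gen list \<Rightarrow> nat)) set \<Rightarrow> (gen list \<Rightarrow> nat) set" where
  "shift_of F = {t \<in> Conf. \<forall>(n, \<tau>) \<in> F. \<not> accepts t n \<tau>}"

definition is_shift_space :: "(gen list \<Rightarrow> nat) set \<Rightarrow> bool" where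
  "is_shift_space X = (\<exists>F. F \<subseteq> {(n, \<tau>). \<tau> \<in> blocks n} \<and> X = shift_of F)"

definition gamma :: "(gen list \<Rightarrow> nat) set \<Rightarrow> nat \<Rightarrow> nat" where
  "gamma X n = card ((\<lambda>t. restrict t (E n)) ` X)"

end

theory Submission
  imports Defs
begin

text \<open>The ball \<open>E (n + 2)\<close> is the disjoint union of \<open>{e, s2}\<close>, \<open>s1 E (n + 1)\<close> and
\<open>s2 s1 E n\<close>. Since shift spaces are invariant under translation, a pattern on \<open>E (n + 2)\<close>
is determined by two symbols, a pattern on \<open>E (n + 1)\<close> and a pattern on \<open>E n\<close>, so
\<open>\<gamma> (n + 2) \<le> 4 \<gamma> (n + 1) \<gamma> n\<close>. Hence \<open>a n = ln (\<gamma> n)\<close> satisfies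
\<open>a (n + 2) \<le> a (n + 1) + a n + ln 4\<close>, and \<open>|E n|\<close> satisfies the same recursion with equality
and constant \<open>2\<close>. For such a sequence, shifted to be nonnegative, \<open>(\<phi> a (n + 1) + a n) / \<phi>\<^sup>n\<close>
is nonincreasing (\<open>\<phi>\<close> the golden ratio), which forces \<open>a n / \<phi>\<^sup>n\<close> to converge. The entropy
quotient is the ratio of two such limits, the one for \<open>|E n|\<close> being at least \<open>1\<close>.\<close>

lemma UNIV_gen: "(UNIV :: gen set) = {S1, S2}"
  using gen.exhaust by auto

lemma gen_neq_iff [simp]: "x \<noteq> S1 \<longleftrightarrow> x = S2" "x \<noteq> S2 \<longleftrightarrow> x = S1"
  by (cases x; simp)+

lemma reduced_Cons_S1 [simp]: "reduced (S1 # w) = reduced w"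
  by (cases w) auto

lemma reduced_Cons_S2: "reduced (S2 # w) \<longleftrightarrow> reduced w \<and> (w = [] \<or> hd w \<noteq> S2)"
  by (cases w) auto

lemma reduced_append:
  "reduced (u @ v) \<longleftrightarrow> reduced u \<and> reduced v \<and> (u = [] \<or> v = [] \<or> last u \<noteq> S2 \<or> hd v \<noteq> S2)"
proof (induction u)
  case (Cons a u)
  then show ?case
    by (cases a; cases u; cases v) (auto simp: reduced_Cons_S2)
qed simp

lemma gmul_in_Gset: "u \<in> Gset \<Longrightarrow> v \<in> Gset \<Longrightarrow> gmul u v \<in> Gset"
  by (cases v) (auto simp: Gset_def gmul_def reduced_append reduced_Cons_S2)

lemma last_gmul: "v \<noteq> [] \<Longrightarrow> last (gmul u v) = last v"
  by (cases v) (auto simp: gmul_def)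

lemma hd_gmul: "u \<noteq> [] \<Longrightarrow> hd (gmul u v) = hd u"
  by (simp add: gmul_def)

lemma gmul_Nil [simp]: "gmul u [] = u" "gmul [] v = v"
  by (simp_all add: gmul_def)

lemma gmul_assoc: "gmul (gmul u v) w = gmul u (gmul v w)"
proof (cases "u = [] \<or> v = [] \<or> w = []")
  case False
  then have "gmul u v \<noteq> []" "gmul v w \<noteq> []"
    by (auto simp: gmul_def)
  with False show ?thesis
    unfolding gmul_def[of "gmul u v"] gmul_def[of u "gmul v w"]
    by (simp add: last_gmul hd_gmul) (auto simp: gmul_def)
qed auto

lemma E_SucSuc:
  "E (Suc (Suc n)) = {[], [S2]} \<union> Cons S1 ` E (Suc n) \<union> (\<lambda>w. S2 # S1 # w) ` E n"
proof (rule set_eqI)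
  fix w
  show "w \<in> E (Suc (Suc n)) \<longleftrightarrow> w \<in> {[], [S2]} \<union> Cons S1 ` E (Suc n) \<union> (\<lambda>w. S2 # S1 # w) ` E n"
  proof (cases w rule: reduced.cases)
    case (3 x y w')
    then show ?thesis by (cases x; cases y) (auto simp: E_def Gset_def)
  qed (auto simp: E_def Gset_def)
qed

lemma finite_E: "finite (E n)"
proof -
  have "finite {xs. set xs \<subseteq> (UNIV :: gen set) \<and> length xs \<le> n}"
    by (simp add: UNIV_gen finite_lists_length_le)
  then show ?thesis
    by (rule finite_subset[rotated]) (auto simp: E_def)
qed

lemma card_E_SucSuc: "card (E (Suc (Suc n))) = card (E (Suc n)) + card (E n) + 2"
proof -
  have "card (Cons S1 ` E (Suc n)) = card (E (Suc n))"
    "card ((\<lambda>w. S2 # S1 # w) ` E n) = card (E n)"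
    by (auto intro: card_image inj_onI)
  moreover have "card (Cons S1 ` E (Suc n) \<union> (\<lambda>w. S2 # S1 # w) ` E n) =
      card (Cons S1 ` E (Suc n)) + card ((\<lambda>w. S2 # S1 # w) ` E n)"
    by (rule card_Un_disjoint) (auto simp: finite_E)
  moreover have "[] \<notin> Cons S1 ` E (Suc n) \<union> (\<lambda>w. S2 # S1 # w) ` E n"
    "[S2] \<notin> Cons S1 ` E (Suc n) \<union> (\<lambda>w. S2 # S1 # w) ` E n"
    by auto
  ultimately show ?thesis
    unfolding E_SucSuc by (simp add: finite_E)
qed

lemma E_0: "E 0 = {[]}"
  by (auto simp: E_def Gset_def)

lemma E_1: "E (Suc 0) = {[], [S1], [S2]}"
proof (rule set_eqI)
  fix w
  show "w \<in> E (Suc 0) \<longleftrightarrow> w \<in> {[], [S1], [S2]}"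
    by (cases w rule: reduced.cases) (auto simp: E_def Gset_def)
qed

lemma Conf_apply: "t \<in> Conf \<Longrightarrow> g \<in> Gset \<Longrightarrow> t g \<in> Alph"
  by (auto simp: Conf_def)

definition translate :: "gen list \<Rightarrow> (gen list \<Rightarrow> nat) \<Rightarrow> (gen list \<Rightarrow> nat)" where
  "translate g t = restrict (\<lambda>h. t (gmul g h)) Gset"

lemma translate_in_Conf: "t \<in> Conf \<Longrightarrow> g \<in> Gset \<Longrightarrow> translate g t \<in> Conf"
  by (auto simp: translate_def Conf_def gmul_in_Gset)

lemma accepts_translate:
  assumes "g \<in> Gset" and "accepts (translate g t) n \<tau>"
  shows "accepts t n \<tau>"
proof -
  obtain h where h: "h \<in> Gset" "\<forall>g'\<in>E n. translate g t (gmul h g') = \<tau> g'"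
    using assms(2) unfolding accepts_def by blast
  have "\<forall>g'\<in>E n. t (gmul (gmul g h) g') = \<tau> g'"
    using h assms(1) by (auto simp: translate_def gmul_assoc E_def gmul_in_Gset)
  with assms(1) h(1) show ?thesis
    unfolding accepts_def by (blast intro: gmul_in_Gset)
qed

lemma shift_space_subset_Conf: "is_shift_space X \<Longrightarrow> X \<subseteq> Conf"
  by (auto simp: is_shift_space_def shift_of_def)

lemma translate_in_shift_space:
  assumes "is_shift_space X" and "t \<in> X" and "g \<in> Gset"
  shows "translate g t \<in> X"
proof -
  obtain F where X: "X = shift_of F"
    using assms(1) unfolding is_shift_space_def by blast
  with assms(2,3) show ?thesis
    unfolding shift_of_def by (auto simp: translate_in_Conf dest: accepts_translate)
qed

definition patterns :: "(gen list \<Rightarrow> nat) set \<Rightarrow> nat \<Rightarrow> (gen list \<Rightarrow> nat) set" where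
  "patterns X n = (\<lambda>t. restrict t (E n)) ` X"

lemma gamma_eq_card_patterns: "gamma X n = card (patterns X n)"
  by (simp add: gamma_def patterns_def)

lemma patterns_subset: "X \<subseteq> Conf \<Longrightarrow> patterns X n \<subseteq> E n \<rightarrow>\<^sub>E Alph"
  by (auto simp: patterns_def Conf_def E_def PiE_def Pi_def)

lemma finite_patterns: "X \<subseteq> Conf \<Longrightarrow> finite (patterns X n)"
  using patterns_subset by (rule finite_subset) (auto intro: finite_PiE simp: finite_E Alph_def)

definition decompose :: "nat \<Rightarrow> (gen list \<Rightarrow> nat) \<Rightarrow> nat \<times> nat \<times> (gen list \<Rightarrow> nat) \<times> (gen list \<Rightarrow> nat)"
  where "decompose n r =
    (r [], r [S2], restrict (\<lambda>w. r (S1 # w)) (E (Suc n)), restrict (\<lambda>w. r (S2 # S1 # w)) (E n))"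

lemma inj_on_decompose: "inj_on (decompose n) (E (Suc (Suc n)) \<rightarrow>\<^sub>E A)"
proof (rule inj_onI)
  fix r r' assume r: "r \<in> E (Suc (Suc n)) \<rightarrow>\<^sub>E A" "r' \<in> E (Suc (Suc n)) \<rightarrow>\<^sub>E A"
    and "decompose n r = decompose n r'"
  then have "r [] = r' []" "r [S2] = r' [S2]"
    and "restrict (\<lambda>w. r (S1 # w)) (E (Suc n)) = restrict (\<lambda>w. r' (S1 # w)) (E (Suc n))"
    and "restrict (\<lambda>w. r (S2 # S1 # w)) (E n) = restrict (\<lambda>w. r' (S2 # S1 # w)) (E n)"
    by (simp_all add: decompose_def)
  then have "r w = r' w" if "w \<in> E (Suc (Suc n))" for w
    using that unfolding E_SucSuc by (auto simp: fun_eq_iff split: if_splits)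
  with r show "r = r'"
    by (intro PiE_ext)
qed

lemma decompose_patterns:
  assumes X: "is_shift_space X" and r: "r \<in> patterns X (Suc (Suc n))"
  shows "decompose n r \<in> Alph \<times> Alph \<times> patterns X (Suc n) \<times> patterns X n"
proof -
  obtain t where t: "t \<in> X" "r = restrict t (E (Suc (Suc n)))"
    using r unfolding patterns_def by blast
  have "translate [S1] t \<in> X" "translate [S2, S1] t \<in> X"
    using X t(1) by (auto intro!: translate_in_shift_space simp: Gset_def)
  moreover have "restrict (\<lambda>w. r (S1 # w)) (E (Suc n)) = restrict (translate [S1] t) (E (Suc n))"
    "restrict (\<lambda>w. r (S2 # S1 # w)) (E n) = restrict (translate [S2, S1] t) (E n)"
    unfolding t(2) E_SucSuc by (auto simp: translate_def gmul_def E_def)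
  moreover have "t [] \<in> Alph" "t [S2] \<in> Alph"
    using t(1) shift_space_subset_Conf[OF X] by (auto intro!: Conf_apply simp: Gset_def)
  ultimately show ?thesis
    unfolding decompose_def patterns_def t(2) E_SucSuc by auto
qed

lemma gamma_SucSuc_le:
  assumes "is_shift_space X"
  shows "gamma X (Suc (Suc n)) \<le> 4 * gamma X (Suc n) * gamma X n"
proof -
  let ?B = "Alph \<times> Alph \<times> patterns X (Suc n) \<times> patterns X n"
  have XC: "X \<subseteq> Conf"
    using assms by (rule shift_space_subset_Conf)
  have "inj_on (decompose n) (patterns X (Suc (Suc n)))"
    using inj_on_decompose patterns_subset[OF XC] by (rule inj_on_subset)
  moreover have "decompose n ` patterns X (Suc (Suc n)) \<subseteq> ?B"
    using decompose_patterns[OF assms] by blast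
  ultimately have "gamma X (Suc (Suc n)) \<le> card ?B"
    unfolding gamma_eq_card_patterns
    by (rule card_inj_on_le) (simp add: finite_patterns[OF XC] Alph_def)
  also have "card ?B = 4 * gamma X (Suc n) * gamma X n"
    by (simp add: card_cartesian_product Alph_def gamma_eq_card_patterns)
  finally show ?thesis .
qed

definition golden_ratio :: real where
  "golden_ratio = (1 + sqrt 5) / 2"

lemma golden_ratio_squared: "golden_ratio\<^sup>2 = golden_ratio + 1"
  by (simp add: golden_ratio_def power2_eq_square algebra_simps)

lemma one_less_golden_ratio: "1 < golden_ratio"
proof -
  have "1 < sqrt 5" by simp
  then show ?thesis by (simp add: golden_ratio_def)
qed

lemma LIMSEQ_zero_of_contractive_bound:
  fixes e d :: "nat \<Rightarrow> real"
  assumes q: "0 \<le> q" "q < 1"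
    and contr: "\<And>n. \<bar>e (Suc n)\<bar> \<le> q * \<bar>e n\<bar> + d n"
    and d: "d \<longlonglongrightarrow> 0"
  shows "e \<longlonglongrightarrow> 0"
proof (rule LIMSEQ_I)
  fix r :: real assume r: "0 < r"
  then have "0 < r * (1 - q) / 2" using q by simp
  from LIMSEQ_D[OF d this] obtain N where N: "\<And>n. N \<le> n \<Longrightarrow> \<bar>d n\<bar> < r * (1 - q) / 2"
    by auto
  \<comment> \<open>Beyond \<open>N\<close> the bound contracts towards \<open>r / 2\<close>, the fixed point of \<open>y \<mapsto> q y + r (1 - q) / 2\<close>.\<close>
  have bound: "\<bar>e (N + k)\<bar> \<le> q ^ k * \<bar>e N\<bar> + r / 2" for k
  proof (induction k)
    case (Suc k)
    have "\<bar>e (N + Suc k)\<bar> \<le> q * \<bar>e (N + k)\<bar> + d (N + k)"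
      using contr[of "N + k"] by simp
    also have "\<dots> \<le> q * (q ^ k * \<bar>e N\<bar> + r / 2) + r * (1 - q) / 2"
      using N[of "N + k"] Suc q by (intro add_mono mult_left_mono) auto
    also have "\<dots> = q ^ Suc k * \<bar>e N\<bar> + r / 2"
      by (simp add: field_simps)
    finally show ?case .
  qed (use r in simp)
  have "(\<lambda>k. q ^ k * \<bar>e N\<bar>) \<longlonglongrightarrow> 0"
    using q by (intro tendsto_mult_left_zero LIMSEQ_power_zero) auto
  from LIMSEQ_D[OF this, of "r / 2"] r
  obtain K where K: "\<And>k. K \<le> k \<Longrightarrow> q ^ k * \<bar>e N\<bar> < r / 2"
    using q by auto
  show "\<exists>no. \<forall>n\<ge>no. norm (e n - 0) < r"
  proof (intro exI allI impI)
    fix n assume "N + K \<le> n"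
    then have "n = N + (n - N)" "K \<le> n - N"
      by simp_all
    then show "norm (e n - 0) < r"
      using bound[of "n - N"] K[of "n - N"] by simp
  qed
qed

lemma convergent_div_golden_ratio_pow:
  fixes x :: "nat \<Rightarrow> real"
  assumes nonneg: "\<And>n. 0 \<le> x n" and fib: "\<And>n. x (Suc (Suc n)) \<le> x (Suc n) + x n"
  shows "convergent (\<lambda>n. x n / golden_ratio ^ n)"
proof -
  let ?\<phi> = golden_ratio
  have \<phi>: "0 < ?\<phi>" "?\<phi> * ?\<phi> = ?\<phi> + 1"
    using one_less_golden_ratio golden_ratio_squared by (simp_all add: power2_eq_square)
  define s where "s n = x n / ?\<phi> ^ n" for n
  \<comment> \<open>\<open>\<phi> x (n+1) + x n\<close> grows at most by the factor \<open>\<phi>\<close>, because \<open>\<phi> + 1 = \<phi>\<^sup>2\<close>.\<close>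
  define z where "z n = (?\<phi> * x (Suc n) + x n) / ?\<phi> ^ n" for n
  have "z (Suc n) \<le> z n" for n
  proof -
    have "?\<phi> * x (Suc (Suc n)) + x (Suc n) \<le> ?\<phi> * (x (Suc n) + x n) + x (Suc n)"
      using fib[of n] \<phi> by simp
    also have "\<dots> = ?\<phi> * (?\<phi> * x (Suc n) + x n)"
      using \<phi>(2) by (simp add: distrib_left mult.assoc[symmetric] distrib_right)
    finally have "(?\<phi> * x (Suc (Suc n)) + x (Suc n)) / ?\<phi> ^ Suc n
        \<le> ?\<phi> * (?\<phi> * x (Suc n) + x n) / ?\<phi> ^ Suc n"
      using \<phi> by (intro divide_right_mono) auto
    then show ?thesis
      using \<phi> by (simp add: z_def)
  qed
  moreover have "0 \<le> z n" for n
    using nonneg \<phi> by (simp add: z_def)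
  ultimately obtain M where M: "z \<longlonglongrightarrow> M"
    using decseq_convergent[of z 0] unfolding decseq_Suc_iff by blast
  define q where "q = 1 / ?\<phi>\<^sup>2"
  \<comment> \<open>As \<open>z n = \<phi>\<^sup>2 s (n + 1) + s n\<close>, the only candidate limit of \<open>s\<close> is \<open>M / (\<phi>\<^sup>2 + 1)\<close>,
    and the distance to it contracts by the factor \<open>1 / \<phi>\<^sup>2\<close> up to a null sequence.\<close>
  define K where "K = M / (?\<phi>\<^sup>2 + 1)"
  have "z n = ?\<phi>\<^sup>2 * s (Suc n) + s n" for n
    using \<phi>(1) by (simp add: z_def s_def field_simps power2_eq_square)
  moreover have "?\<phi>\<^sup>2 + 1 \<noteq> 0"
    using zero_le_power2[of ?\<phi>] by linarith
  then have "M = K * (?\<phi>\<^sup>2 + 1)"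
    by (simp add: K_def)
  ultimately have step: "s (Suc n) - K = q * (z n - M) - q * (s n - K)" for n
    using \<phi>(1) by (simp add: q_def field_simps)
  have q: "0 \<le> q" "q < 1"
    using one_less_golden_ratio by (auto simp: q_def)
  have "\<bar>s (Suc n) - K\<bar> \<le> q * \<bar>s n - K\<bar> + q * \<bar>z n - M\<bar>" for n
  proof -
    have "\<bar>s (Suc n) - K\<bar> \<le> \<bar>q * (z n - M)\<bar> + \<bar>q * (s n - K)\<bar>"
      unfolding step by (rule abs_triangle_ineq4)
    then show ?thesis
      using q by (simp add: abs_mult)
  qed
  moreover have "(\<lambda>n. q * \<bar>z n - M\<bar>) \<longlonglongrightarrow> 0"
    using M by (intro tendsto_mult_right_zero tendsto_rabs_zero) (simp add: LIM_zero_iff)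
  ultimately have "(\<lambda>n. s n - K) \<longlonglongrightarrow> 0"
    by (rule LIMSEQ_zero_of_contractive_bound[OF q])
  then have "s \<longlonglongrightarrow> K"
    by (simp add: LIM_zero_iff)
  then show ?thesis
    unfolding s_def by (rule convergentI)
qed

lemma convergent_div_golden_ratio_pow_offset:
  fixes x :: "nat \<Rightarrow> real"
  assumes "\<And>n. 0 \<le> x n + c" and "\<And>n. x (Suc (Suc n)) \<le> x (Suc n) + x n + c"
  shows "convergent (\<lambda>n. x n / golden_ratio ^ n)"
proof -
  have "convergent (\<lambda>n. (x n + c) / golden_ratio ^ n)"
  proof (rule convergent_div_golden_ratio_pow)
    fix n
    show "0 \<le> x n + c" by fact
    show "x (Suc (Suc n)) + c \<le> x (Suc n) + c + (x n + c)"
      using assms(2)[of n] by simp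
  qed
  moreover have "(\<lambda>n. c / golden_ratio ^ n) \<longlonglongrightarrow> 0"
    using one_less_golden_ratio by (rule LIMSEQ_divide_realpow_zero)
  ultimately have "convergent (\<lambda>n. (x n + c) / golden_ratio ^ n - c / golden_ratio ^ n)"
    by (intro convergent_diff) (auto simp: convergent_def)
  then show ?thesis
    by (simp add: add_divide_distrib)
qed

lemma golden_ratio_pow_le_card_E: "golden_ratio ^ n \<le> card (E n)"
proof -
  have "golden_ratio ^ n \<le> card (E n) \<and> golden_ratio ^ Suc n \<le> card (E (Suc n))"
  proof (induction n)
    case 0
    have "sqrt 5 \<le> 3" by (rule real_le_lsqrt) auto
    then show ?case by (simp add: E_0 E_1 golden_ratio_def)
  next
    case (Suc n)
    have "golden_ratio ^ Suc (Suc n) = golden_ratio ^ n * golden_ratio\<^sup>2"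
      by (simp only: power_add[symmetric] add_2_eq_Suc')
    also have "\<dots> = golden_ratio ^ Suc n + golden_ratio ^ n"
      by (simp add: golden_ratio_squared algebra_simps)
    finally have "golden_ratio ^ Suc (Suc n) = golden_ratio ^ Suc n + golden_ratio ^ n" .
    with Suc show ?case
      by (simp add: card_E_SucSuc)
  qed
  then show ?thesis ..
qed

lemma gamma_pos:
  assumes "is_shift_space X" and "X \<noteq> {}"
  shows "0 < gamma X n"
proof -
  have "patterns X n \<noteq> {}"
    using assms(2) by (simp add: patterns_def)
  then show ?thesis
    using finite_patterns[OF shift_space_subset_Conf[OF assms(1)]]
    by (simp add: gamma_eq_card_patterns card_gt_0_iff)
qed

lemma ln_gamma_SucSuc_le:
  assumes "is_shift_space X" and "X \<noteq> {}"
  shows "ln (gamma X (Suc (Suc n))) \<le> ln (gamma X (Suc n)) + ln (gamma X n) + ln 4"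
proof -
  have "ln (gamma X (Suc (Suc n))) \<le> ln (4 * gamma X (Suc n) * gamma X n)"
    using gamma_SucSuc_le[OF assms(1)] gamma_pos[OF assms] by (simp flip: of_nat_mult)
  also have "\<dots> = ln (gamma X (Suc n)) + ln (gamma X n) + ln 4"
    using gamma_pos[OF assms] by (simp add: ln_mult)
  finally show ?thesis .
qed

theorem theorem1:
  assumes "is_shift_space X" and "X \<noteq> {}"
  shows "convergent (\<lambda>n. ln (real (gamma X n)) / real (card (E n)))"
proof -
  have "convergent (\<lambda>n. ln (gamma X n) / golden_ratio ^ n)"
  proof (rule convergent_div_golden_ratio_pow_offset)
    show "0 \<le> ln (gamma X n) + ln 4" for n
      using gamma_pos[OF assms, of n] by simp
  qed (rule ln_gamma_SucSuc_le[OF assms])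
  then obtain K where K: "(\<lambda>n. ln (gamma X n) / golden_ratio ^ n) \<longlonglongrightarrow> K"
    unfolding convergent_def by blast
  have "convergent (\<lambda>n. card (E n) / golden_ratio ^ n)"
    by (rule convergent_div_golden_ratio_pow_offset[where c = 2]) (simp_all add: card_E_SucSuc)
  then obtain L where L: "(\<lambda>n. card (E n) / golden_ratio ^ n) \<longlonglongrightarrow> L"
    unfolding convergent_def by blast
  have "1 \<le> L"
    using golden_ratio_pow_le_card_E one_less_golden_ratio
    by (intro LIMSEQ_le_const[OF L]) auto
  then have "(\<lambda>n. (ln (gamma X n) / golden_ratio ^ n) / (card (E n) / golden_ratio ^ n)) \<longlonglongrightarrow> K / L"
    by (intro tendsto_divide K L) auto
  then show ?thesis
    using one_less_golden_ratio by (auto intro: convergentI)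
qed

end
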